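(* Let $\mathcal O_M\subseteq\mathcal O_L$ be a quadratic extension of Dedekind domains with fraction fields $M\subseteq L$, $L/M$ Galois with $\operatorname{Gal}(L/M)=\langle\sigma\rangle\cong{\mathbf Z}/2{\mathbf Z}$. Define $\mathrm{ATr}:\mathcal O_L\to\mathcal O_L$ by $\mathrm{ATr}(x)=x-x^\sigma$ and $\mathscr A=\mathrm{ATr}(\mathcal O_L)$. Then for every nonzero ideal $I\subseteq\mathcal O_M$, \[ \mathcal O_M+I\mathcal O_L=\{x\in\mathcal O_L\mid \mathrm{ATr}(x)\in I\mathscr A\}. \] Moreover $\mathscr A$ is a projective $\mathcal O_M$-module of rank $1$.
   Context: "Quadratic extension of Dedekind domains" means $\mathcal O_L$ is a Dedekind domain containing $\mathcal O_M$, finitely generated as an $\mathcal O_M$-module, with $[L:M]=2$. *)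

theory Defs
  imports "HOL-Computational_Algebra.Polynomial"
begin

text \<open>All rings are subrings of an ambient field 'a (the field L).\<close>

definition subring :: "'a::field set \<Rightarrow> bool" where
  "subring R \<longleftrightarrow> 0 \<in> R \<and> 1 \<in> R \<and>
     (\<forall>x\<in>R. \<forall>y\<in>R. x + y \<in> R \<and> x - y \<in> R \<and> x * y \<in> R)"

definition frac :: "'a::field set \<Rightarrow> 'a set" where
  "frac R = {a / b | a b. a \<in> R \<and> b \<in> R \<and> b \<noteq> 0}"

definition set_mult :: "'a::field set \<Rightarrow> 'a set \<Rightarrow> 'a set" where
  "set_mult X Y = {\<Sum>k<n. x k * y k | (n::nat) x y. \<forall>k<n. x k \<in> X \<and> y k \<in> Y}"

definition ideal_of :: "'a::field set \<Rightarrow> 'a set \<Rightarrow> bool" where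
  "ideal_of R I \<longleftrightarrow> I \<subseteq> R \<and> 0 \<in> I \<and>
     (\<forall>x\<in>I. \<forall>y\<in>I. x + y \<in> I) \<and> (\<forall>r\<in>R. \<forall>x\<in>I. r * x \<in> I)"

definition prime_ideal_of :: "'a::field set \<Rightarrow> 'a set \<Rightarrow> bool" where
  "prime_ideal_of R P \<longleftrightarrow> ideal_of R P \<and> P \<noteq> R \<and>
     (\<forall>a\<in>R. \<forall>b\<in>R. a * b \<in> P \<longrightarrow> a \<in> P \<or> b \<in> P)"

definition maximal_ideal_of :: "'a::field set \<Rightarrow> 'a set \<Rightarrow> bool" where
  "maximal_ideal_of R P \<longleftrightarrow> ideal_of R P \<and> P \<noteq> R \<and>
     (\<forall>J. ideal_of R J \<and> P \<subseteq> J \<longrightarrow> J = P \<or> J = R)"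

definition integral_over :: "'a::field set \<Rightarrow> 'a \<Rightarrow> bool" where
  "integral_over R x \<longleftrightarrow>
     (\<exists>p::'a poly. (\<forall>i. coeff p i \<in> R) \<and> lead_coeff p = 1 \<and> poly p x = 0)"

definition dedekind_domain :: "'a::field set \<Rightarrow> bool" where
  "dedekind_domain R \<longleftrightarrow> subring R \<and>
     (\<forall>I. ideal_of R I \<longrightarrow> (\<exists>F. finite F \<and> F \<subseteq> I \<and> I = set_mult R F)) \<and>
     (\<forall>x\<in>frac R. integral_over R x \<longrightarrow> x \<in> R) \<and>
     (\<forall>P. prime_ideal_of R P \<and> P \<noteq> {0} \<longrightarrow> maximal_ideal_of R P)"

definition fin_gen_module :: "'a::field set \<Rightarrow> 'a set \<Rightarrow> bool" where
  "fin_gen_module R S \<longleftrightarrow> (\<exists>F. finite F \<and> F \<subseteq> S \<and> S = set_mult R F)"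

definition degree_two_over :: "'a::field set \<Rightarrow> bool" where
  "degree_two_over K \<longleftrightarrow> (\<exists>b1 b2. \<forall>x. \<exists>!m. fst m \<in> K \<and> snd m \<in> K \<and>
       x = fst m * b1 + snd m * b2)"

definition field_aut :: "('a::field \<Rightarrow> 'a) \<Rightarrow> bool" where
  "field_aut \<tau> \<longleftrightarrow> bij \<tau> \<and> \<tau> 1 = 1 \<and>
     (\<forall>x y. \<tau> (x + y) = \<tau> x + \<tau> y \<and> \<tau> (x * y) = \<tau> x * \<tau> y)"

definition Gal :: "'a::field set \<Rightarrow> ('a \<Rightarrow> 'a) set" where
  "Gal K = {\<tau>. field_aut \<tau> \<and> (\<forall>k\<in>K. \<tau> k = k)}"

definition galois_over :: "'a::field set \<Rightarrow> bool" where
  "galois_over K \<longleftrightarrow> {x. \<forall>\<tau>\<in>Gal K. \<tau> x = x} = K"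

definition free_mod :: "'a::field set \<Rightarrow> nat \<Rightarrow> (nat \<Rightarrow> 'a) set" where
  "free_mod R n = {v. (\<forall>i. v i \<in> R) \<and> (\<forall>i\<ge>n. v i = 0)}"

text \<open>A (a submodule of the ambient field) is a projective R-module: a direct summand
  of a (finitely generated) free R-module R^n, i.e. there are R-linear
  i : A \<rightarrow> R^n and p : R^n \<rightarrow> A with p \<circ> i = id.\<close>
definition projective_module :: "'a::field set \<Rightarrow> 'a set \<Rightarrow> bool" where
  "projective_module R A \<longleftrightarrow> (\<exists>n::nat. \<exists>\<iota> \<pi>.
     (\<forall>x\<in>A. \<iota> x \<in> free_mod R n) \<and>
     (\<forall>x\<in>A. \<forall>y\<in>A. \<iota> (x + y) = (\<lambda>i. \<iota> x i + \<iota> y i)) \<and>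
     (\<forall>r\<in>R. \<forall>x\<in>A. \<iota> (r * x) = (\<lambda>i. r * \<iota> x i)) \<and>
     (\<forall>v\<in>free_mod R n. \<pi> v \<in> A) \<and>
     (\<forall>v\<in>free_mod R n. \<forall>w\<in>free_mod R n. \<pi> (\<lambda>i. v i + w i) = \<pi> v + \<pi> w) \<and>
     (\<forall>r\<in>R. \<forall>v\<in>free_mod R n. \<pi> (\<lambda>i. r * v i) = r * \<pi> v) \<and>
     (\<forall>x\<in>A. \<pi> (\<iota> x) = x))"

text \<open>Rank of a submodule A of the ambient field over a domain R: the dimension of
  Frac(R) \<otimes> A = Frac(R)\<cdot>A; rank 1 means this span is one-dimensional.\<close>
definition rank_one :: "'a::field set \<Rightarrow> 'a set \<Rightarrow> bool" where
  "rank_one R A \<longleftrightarrow> (\<exists>a\<in>A. a \<noteq> 0 \<and> (\<forall>x\<in>A. \<exists>m\<in>frac R. x = m * a))"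

end

theory Submission
  imports Defs "HOL-Library.Set_Algebras"
begin

text \<open>An element of \<open>O\<^sub>L\<close> fixed by \<open>\<sigma>\<close> lies in
  \<open>M\<close> with bounded denominators in all its powers, hence is integral over \<open>O\<^sub>M\<close> and lies in \<open>O\<^sub>M\<close>.
  So if \<open>ATr z = \<Sum> i\<^sub>k ATr l\<^sub>k\<close> with \<open>i\<^sub>k \<in> I\<close>, then \<open>z - \<Sum> i\<^sub>k l\<^sub>k \<in> O\<^sub>M\<close>, which is the
  nontrivial inclusion of \<open>O\<^sub>M + I O\<^sub>L = ATr\<^sup>-\<^sup>1(I A)\<close>. Since \<open>\<sigma>\<close> acts as \<open>-1\<close> on \<open>A\<close>, the quotient
  of two elements of \<open>A\<close> lies in \<open>M\<close>, so \<open>A\<close> has rank one, and after clearing denominators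
  \<open>e A\<close> is a nonzero ideal of \<open>O\<^sub>M\<close>. Nonzero ideals of a Dedekind domain are invertible, and an
  invertible module is a direct summand of a free one.\<close>

lemma sum_closed:
  assumes "0 \<in> S" "\<forall>x\<in>S. \<forall>y\<in>S. x + y \<in> S" "\<forall>k<n. f k \<in> S"
  shows "(\<Sum>k<(n::nat). f k) \<in> S"
  using assms(3) by (induction n) (auto simp: assms(1,2))

lemma mem_set_mult_iff:
  "z \<in> set_mult X Y \<longleftrightarrow> (\<exists>n x y. z = (\<Sum>k<(n::nat). x k * y k) \<and> (\<forall>k<n. x k \<in> X \<and> y k \<in> Y))"
  unfolding set_mult_def by blast

lemma mem_set_mult_image_iff:
  "z \<in> set_mult X (f ` Y) \<longleftrightarrow>
    (\<exists>n x y. z = (\<Sum>k<(n::nat). x k * f (y k)) \<and> (\<forall>k<n. x k \<in> X \<and> y k \<in> Y))"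
proof
  assume "z \<in> set_mult X (f ` Y)"
  then obtain n :: nat and x w where z: "z = (\<Sum>k<n. x k * w k)"
    and xw: "\<forall>k<n. x k \<in> X \<and> w k \<in> f ` Y"
    unfolding mem_set_mult_iff by blast
  then have "\<forall>k. \<exists>y. k < n \<longrightarrow> y \<in> Y \<and> w k = f y"
    by blast
  then obtain y where y: "\<forall>k<n. y k \<in> Y \<and> w k = f (y k)"
    by metis
  then have "z = (\<Sum>k<n. x k * f (y k))"
    unfolding z by (intro sum.cong) auto
  with xw y show "\<exists>n x y. z = (\<Sum>k<(n::nat). x k * f (y k)) \<and> (\<forall>k<n. x k \<in> X \<and> y k \<in> Y)"
    by blast
next
  assume "\<exists>n x y. z = (\<Sum>k<(n::nat). x k * f (y k)) \<and> (\<forall>k<n. x k \<in> X \<and> y k \<in> Y)"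
  then obtain n :: nat and x y where "z = (\<Sum>k<n. x k * f (y k))" "\<forall>k<n. x k \<in> X \<and> y k \<in> Y"
    by blast
  then show "z \<in> set_mult X (f ` Y)"
    unfolding mem_set_mult_iff by (intro exI[of _ n] exI[of _ x] exI[of _ "\<lambda>k. f (y k)"]) simp
qed

lemma zero_mem_set_mult: "0 \<in> set_mult X Y"
  unfolding mem_set_mult_iff by (rule exI[of _ 0]) simp

lemma mult_mem_set_mult: "u \<in> X \<Longrightarrow> v \<in> Y \<Longrightarrow> u * v \<in> set_mult X Y"
  unfolding mem_set_mult_iff by (rule exI[of _ 1]) auto

lemma add_mem_set_mult:
  assumes "a \<in> set_mult X Y" "b \<in> set_mult X Y"
  shows "a + b \<in> set_mult X Y"
proof -
  have "a + (\<Sum>k<m. x k * y k) \<in> set_mult X Y"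
    if "\<forall>k<m. x k \<in> X \<and> y k \<in> Y" for m :: nat and x y
    using that
  proof (induction m)
    case 0
    then show ?case
      using assms(1) by simp
  next
    case (Suc m)
    then have "a + (\<Sum>k<m. x k * y k) \<in> set_mult X Y"
      by simp
    then obtain n :: nat and x' y' where a: "a + (\<Sum>k<m. x k * y k) = (\<Sum>k<n. x' k * y' k)"
      and xy': "\<forall>k<n. x' k \<in> X \<and> y' k \<in> Y"
      unfolding mem_set_mult_iff by blast
    have "a + (\<Sum>k<Suc m. x k * y k) = (\<Sum>k<Suc n. (x'(n := x m)) k * (y'(n := y m)) k)"
      by (simp add: a[symmetric] add.assoc)
    moreover have "\<forall>k<Suc n. (x'(n := x m)) k \<in> X \<and> (y'(n := y m)) k \<in> Y"
      using xy' Suc.prems by (auto simp: less_Suc_eq)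
    ultimately show ?case
      unfolding mem_set_mult_iff by blast
  qed
  then show ?thesis
    using assms(2) by (auto simp: mem_set_mult_iff)
qed

lemma set_mult_subset:
  assumes "0 \<in> S" "\<forall>x\<in>S. \<forall>y\<in>S. x + y \<in> S" "\<forall>x\<in>X. \<forall>y\<in>Y. x * y \<in> S"
  shows "set_mult X Y \<subseteq> S"
  using assms by (auto simp: mem_set_mult_iff intro!: sum_closed)

lemma subring_closed:
  assumes "subring R" "x \<in> R" "y \<in> R"
  shows "x + y \<in> R" "x - y \<in> R" "x * y \<in> R"
  using assms unfolding subring_def by auto

lemma subring_sum_mem: "subring R \<Longrightarrow> \<forall>k<n. f k \<in> R \<Longrightarrow> (\<Sum>k<(n::nat). f k) \<in> R"
  by (rule sum_closed) (auto simp: subring_def)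

lemma subring_power_mem: "subring R \<Longrightarrow> x \<in> R \<Longrightarrow> x ^ n \<in> R"
  by (induction n) (auto simp: subring_def)

lemma subring_subset_frac: "subring R \<Longrightarrow> R \<subseteq> frac R"
  unfolding frac_def subring_def by force

definition submodule_of :: "'a::field set \<Rightarrow> 'a set \<Rightarrow> bool" where
  "submodule_of R A \<longleftrightarrow> 0 \<in> A \<and> (\<forall>x\<in>A. \<forall>y\<in>A. x + y \<in> A) \<and> (\<forall>r\<in>R. \<forall>x\<in>A. r * x \<in> A)"

lemma ideal_of_iff_submodule_of: "ideal_of R I \<longleftrightarrow> I \<subseteq> R \<and> submodule_of R I"
  unfolding ideal_of_def submodule_of_def by blast

lemma submodule_of_self: "subring R \<Longrightarrow> submodule_of R R"
  unfolding submodule_of_def subring_def by blast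

lemma ideal_eq_if_one_mem: "ideal_of R I \<Longrightarrow> 1 \<in> I \<Longrightarrow> I = R"
  unfolding ideal_of_def by (metis mult.right_neutral subsetI subset_antisym)

lemma set_mult_subset_ideal: "ideal_of R I \<Longrightarrow> F \<subseteq> I \<Longrightarrow> set_mult R F \<subseteq> I"
  unfolding ideal_of_def by (intro set_mult_subset) auto

lemma ideal_of_set_plus:
  assumes "subring R" "ideal_of R I" "ideal_of R J"
  shows "ideal_of R (I + J)"
  unfolding ideal_of_def
proof (intro conjI ballI)
  show "I + J \<subseteq> R"
    using assms unfolding ideal_of_def by (auto elim!: set_plus_elim intro: subring_closed(1))
  show "0 \<in> I + J"
    using assms unfolding ideal_of_def by (metis add_0 set_plus_intro)
next
  fix a b assume "a \<in> I + J" "b \<in> I + J"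
  then obtain i j i' j' where "a = i + j" "b = i' + j'" "i \<in> I" "j \<in> J" "i' \<in> I" "j' \<in> J"
    by (auto elim!: set_plus_elim)
  then have "a + b = (i + i') + (j + j')"
    by (simp add: ac_simps)
  also have "\<dots> \<in> I + J"
    using assms(2,3) \<open>i \<in> I\<close> \<open>j \<in> J\<close> \<open>i' \<in> I\<close> \<open>j' \<in> J\<close>
    unfolding ideal_of_def by (intro set_plus_intro) auto
  finally show "a + b \<in> I + J" .
next
  fix r a assume "r \<in> R" "a \<in> I + J"
  then obtain i j where "a = i + j" "i \<in> I" "j \<in> J"
    by (auto elim!: set_plus_elim)
  then show "r * a \<in> I + J"
    using assms(2,3) \<open>r \<in> R\<close> unfolding ideal_of_def by (auto simp: distrib_left)
qed

lemma ideal_of_elt_set_times: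
  assumes "submodule_of R A" "\<forall>a\<in>A. y * a \<in> R"
  shows "ideal_of R (y *o A)"
  unfolding ideal_of_def
proof (intro conjI ballI)
  show "y *o A \<subseteq> R" "0 \<in> y *o A"
    using assms unfolding submodule_of_def elt_set_times_def by force+
next
  fix a b assume "a \<in> y *o A" "b \<in> y *o A"
  then show "a + b \<in> y *o A"
    using assms(1) unfolding submodule_of_def elt_set_times_def by (auto simp flip: distrib_left)
next
  fix r a assume "r \<in> R" "a \<in> y *o A"
  then show "r * a \<in> y *o A"
    using assms(1) unfolding submodule_of_def elt_set_times_def by (auto simp: mult.left_commute)
qed

lemma ideal_of_principal: "subring R \<Longrightarrow> a \<in> R \<Longrightarrow> ideal_of R (a *o R)"
  using submodule_of_self by (auto intro: ideal_of_elt_set_times subring_closed(3))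

lemma mem_principal: "subring R \<Longrightarrow> a \<in> a *o R"
  using set_times_intro2[of 1 R a] unfolding subring_def by simp

lemma principal_subset_ideal: "ideal_of R I \<Longrightarrow> a \<in> I \<Longrightarrow> a *o R \<subseteq> I"
  unfolding ideal_of_def elt_set_times_def by (auto simp: mult.commute)

lemma ideal_of_set_plus_principal:
  assumes "subring R" "ideal_of R I" "a \<in> R"
  shows "ideal_of R (I + a *o R)" "I \<subseteq> I + a *o R" "a \<in> I + a *o R"
proof -
  have "ideal_of R (a *o R)"
    using assms(1,3) by (rule ideal_of_principal)
  then show "ideal_of R (I + a *o R)"
    by (rule ideal_of_set_plus[OF assms(1,2)])
  have "0 \<in> I" "0 \<in> R"
    using assms(1,2) unfolding ideal_of_def subring_def by auto
  then have "0 \<in> a *o R" "a \<in> a *o R"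
    using set_times_intro2[of 0 R a] mem_principal[OF assms(1)] by simp_all
  show "I \<subseteq> I + a *o R"
    using set_zero_plus2[OF \<open>0 \<in> a *o R\<close>, of I] by (simp add: add.commute)
  show "a \<in> I + a *o R"
    using set_plus_intro[OF \<open>0 \<in> I\<close> \<open>a \<in> a *o R\<close>] by simp
qed

lemma mem_set_plus_principal_iff: "z \<in> I + a *o R \<longleftrightarrow> (\<exists>i\<in>I. \<exists>r\<in>R. z = i + a * r)"
  unfolding set_plus_def elt_set_times_def by blast

lemma set_plus_principal_times_subset:
  assumes "subring R" "ideal_of R M" "a \<in> R" "b \<in> R" "a * b \<in> M"
  shows "(M + a *o R) * (M + b *o R) \<subseteq> M"
proof
  fix z assume "z \<in> (M + a *o R) * (M + b *o R)"
  then obtain p q where "z = p * q" "p \<in> M + a *o R" "q \<in> M + b *o R"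
    by (rule set_times_elim)
  then obtain m r m' r' where z: "z = (m + a * r) * (m' + b * r')"
    and mem: "m \<in> M" "r \<in> R" "m' \<in> M" "r' \<in> R"
    unfolding mem_set_plus_principal_iff by blast
  have "z = (m + a * r) * m' + (r * r') * (a * b) + (b * r') * m"
    unfolding z by (simp add: algebra_simps)
  moreover have "m + a * r \<in> R" "r * r' \<in> R" "b * r' \<in> R"
    using assms mem unfolding ideal_of_def by (auto intro: subring_closed)
  ultimately show "z \<in> M"
    using assms(2,5) mem unfolding ideal_of_def by simp
qed

section \<open>Noetherian rings\<close>

definition noetherian :: "'a::field set \<Rightarrow> bool" where
  "noetherian R \<longleftrightarrow> (\<forall>I. ideal_of R I \<longrightarrow> (\<exists>F. finite F \<and> F \<subseteq> I \<and> I = set_mult R F))"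

lemma ideal_of_Union_chain:
  assumes "C \<noteq> {}" "\<forall>X\<in>C. ideal_of R X" "\<forall>X\<in>C. \<forall>Y\<in>C. X \<subseteq> Y \<or> Y \<subseteq> X"
  shows "ideal_of R (\<Union>C)"
  unfolding ideal_of_def
proof (intro conjI ballI)
  have ideal: "X \<subseteq> R" "0 \<in> X" "\<forall>x\<in>X. \<forall>y\<in>X. x + y \<in> X" "\<forall>r\<in>R. \<forall>x\<in>X. r * x \<in> X"
    if "X \<in> C" for X
    using assms(2) that unfolding ideal_of_def by auto
  show "\<Union>C \<subseteq> R"
    using ideal(1) by blast
  show "0 \<in> \<Union>C"
    using ideal(2) assms(1) by blast
  fix x y assume "x \<in> \<Union>C" "y \<in> \<Union>C"
  then obtain X Y where XY: "x \<in> X" "y \<in> Y" "X \<in> C" "Y \<in> C"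
    by blast
  from assms(3) XY(3,4) consider "X \<subseteq> Y" | "Y \<subseteq> X"
    by blast
  then show "x + y \<in> \<Union>C"
    using ideal(3) XY by cases blast+
next
  fix r x assume "r \<in> R" "x \<in> \<Union>C"
  then show "r * x \<in> \<Union>C"
    using assms(2) unfolding ideal_of_def by blast
qed

lemma noetherian_maximal_element:
  assumes "noetherian R" "S \<noteq> {}" "\<forall>I\<in>S. ideal_of R I"
  shows "\<exists>M\<in>S. \<forall>X\<in>S. M \<subseteq> X \<longrightarrow> X = M"
proof (rule subset_Zorn_nonempty[OF assms(2)])
  fix C assume C: "C \<noteq> {}" "subset.chain S C"
  then have "C \<subseteq> S" and chain: "\<forall>X\<in>C. \<forall>Y\<in>C. X \<subseteq> Y \<or> Y \<subseteq> X"
    by (auto simp: subset_chain_def)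
  then have "ideal_of R (\<Union>C)"
    using C(1) assms(3) by (intro ideal_of_Union_chain) auto
  then obtain F where F: "finite F" "F \<subseteq> \<Union>C" "\<Union>C = set_mult R F"
    using assms(1) unfolding noetherian_def by auto
  obtain B where B: "B \<in> C" "F \<subseteq> B"
    using finite_subset_Union_chain[OF F(1,2) C] .
  have "ideal_of R B"
    using B(1) \<open>C \<subseteq> S\<close> assms(3) by auto
  then have "\<Union>C \<subseteq> B"
    unfolding F(3) using B(2) by (rule set_mult_subset_ideal)
  then have "\<Union>C = B"
    using B(1) by auto
  then show "\<Union>C \<in> S"
    using B(1) \<open>C \<subseteq> S\<close> by auto
qed

lemma noetherian_exists_maximal_ideal:
  assumes "noetherian R" "ideal_of R I" "I \<noteq> R"
  shows "\<exists>P. maximal_ideal_of R P \<and> I \<subseteq> P"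
proof -
  define S where "S = {J. ideal_of R J \<and> I \<subseteq> J \<and> J \<noteq> R}"
  have "S \<noteq> {}" "\<forall>J\<in>S. ideal_of R J"
    using assms(2,3) unfolding S_def by auto
  then obtain P where P: "P \<in> S" "\<forall>X\<in>S. P \<subseteq> X \<longrightarrow> X = P"
    using noetherian_maximal_element[OF assms(1)] by meson
  have "maximal_ideal_of R P"
    unfolding maximal_ideal_of_def
  proof (intro conjI allI impI)
    show "ideal_of R P" "P \<noteq> R"
      using P(1) unfolding S_def by auto
    fix J assume J: "ideal_of R J \<and> P \<subseteq> J"
    show "J = P \<or> J = R"
    proof (cases "J = R")
      case False
      with J P(1) have "J \<in> S"
        unfolding S_def by auto
      then show ?thesis
        using P(2) J by simp
    qed simp
  qed
  then show ?thesis
    using P(1) unfolding S_def by auto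
qed

lemma noetherian_ideal_induct [consumes 3, case_names step]:
  assumes "noetherian R" "ideal_of R I" "I \<noteq> {0}"
    and step: "\<And>J. ideal_of R J \<Longrightarrow> J \<noteq> {0} \<Longrightarrow> (\<And>K. ideal_of R K \<Longrightarrow> J \<subset> K \<Longrightarrow> Q K) \<Longrightarrow> Q J"
  shows "Q I"
proof (rule ccontr)
  define S where "S = {J. ideal_of R J \<and> J \<noteq> {0} \<and> \<not> Q J}"
  assume "\<not> Q I"
  then have "S \<noteq> {}" "\<forall>J\<in>S. ideal_of R J"
    using assms(2,3) unfolding S_def by auto
  then obtain M where M: "M \<in> S" "\<forall>X\<in>S. M \<subseteq> X \<longrightarrow> X = M"
    using noetherian_maximal_element[OF assms(1)] by meson
  then have M_ideal: "ideal_of R M" "M \<noteq> {0}" and "\<not> Q M"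
    unfolding S_def by auto
  have "Q K" if K: "ideal_of R K" "M \<subset> K" for K
  proof (rule ccontr)
    assume "\<not> Q K"
    moreover have "K \<noteq> {0}"
      using K M_ideal unfolding ideal_of_def by auto
    ultimately have "K \<in> S"
      using K(1) unfolding S_def by simp
    then show False
      using M(2) K(2) by auto
  qed
  then show False
    using step[OF M_ideal] \<open>\<not> Q M\<close> by blast
qed

section \<open>Integrality from bounded denominators\<close>

lemma scaled_poly_mem_subring:
  assumes "subring R" "\<forall>i. coeff p i \<in> R" "\<forall>n. c * x ^ n \<in> R"
  shows "c * poly p x \<in> R"
proof -
  have "c * poly p x = (\<Sum>i<Suc (degree p). coeff p i * (c * x ^ i))"
    by (simp add: poly_altdef lessThan_Suc_atMost sum_distrib_left algebra_simps)
  also have "\<dots> \<in> R"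
    using assms by (intro subring_sum_mem) (auto intro: subring_closed)
  finally show ?thesis .
qed

lemma ideal_of_scaled_poly_values:
  assumes "subring R" "\<forall>n. c * x ^ n \<in> R"
  shows "ideal_of R {c * poly p x | p. \<forall>i. coeff p i \<in> R}" (is "ideal_of R ?J")
  unfolding ideal_of_def
proof (intro conjI ballI)
  show "?J \<subseteq> R"
    using scaled_poly_mem_subring[OF assms(1) _ assms(2)] by blast
  show "0 \<in> ?J"
    using assms(1) unfolding subring_def by (intro CollectI exI[of _ 0]) simp
next
  fix a b assume "a \<in> ?J" "b \<in> ?J"
  then obtain p q where "a = c * poly p x" "b = c * poly q x"
    and "\<forall>i. coeff p i \<in> R" "\<forall>i. coeff q i \<in> R"
    by blast
  then show "a + b \<in> ?J"
    using assms(1) by (intro CollectI exI[of _ "p + q"])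
      (auto simp: algebra_simps intro: subring_closed)
next
  fix r a assume "r \<in> R" "a \<in> ?J"
  then obtain p where "a = c * poly p x" "\<forall>i. coeff p i \<in> R"
    by blast
  then show "r * a \<in> ?J"
    using assms(1) \<open>r \<in> R\<close> by (intro CollectI exI[of _ "smult r p"])
      (auto simp: algebra_simps intro: subring_closed)
qed

lemma integral_over_if_poly_eq_power:
  assumes "subring R" "\<forall>i. coeff q i \<in> R" "degree q \<le> N" "poly q x = x ^ Suc N"
  shows "integral_over R x"
proof -
  define p where "p = monom 1 (Suc N) - q"
  have "coeff p (Suc N) = 1"
    using assms(3) by (simp add: p_def coeff_eq_0)
  moreover have "degree p \<le> Suc N"
    unfolding p_def using assms(3) by (intro degree_diff_le) (auto simp: degree_monom_eq)
  ultimately have "lead_coeff p = 1"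
    by (metis le_antisym le_degree zero_neq_one)
  moreover have "\<forall>i. coeff p i \<in> R"
    using assms(1,2) by (auto simp: p_def subring_def)
  moreover have "poly p x = 0"
    using assms(4) by (simp add: p_def poly_monom)
  ultimately show ?thesis
    unfolding integral_over_def by blast
qed

text \<open>The ideal of values \<open>c * p x\<close> is finitely generated, so \<open>c * x ^ Suc N\<close> is an
  \<open>R\<close>-combination of finitely many of them; cancelling \<open>c\<close> gives a monic relation for \<open>x\<close>.\<close>
lemma integral_over_if_bounded_denominator:
  assumes "subring R" "noetherian R" "c \<in> R" "c \<noteq> 0" "\<forall>n. c * x ^ n \<in> R"
  shows "integral_over R x"
proof -
  define J where "J = {c * poly p x | p. \<forall>i. coeff p i \<in> R}"
  have "ideal_of R J"
    unfolding J_def using assms(1,5) by (rule ideal_of_scaled_poly_values)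
  then have "\<exists>F. finite F \<and> F \<subseteq> J \<and> J = set_mult R F"
    using assms(2) unfolding noetherian_def by simp
  then obtain F where F: "finite F" "F \<subseteq> J" "J = set_mult R F"
    by blast
  have "\<forall>f\<in>F. \<exists>p. (\<forall>i. coeff p i \<in> R) \<and> f = c * poly p x"
    using F(2) unfolding J_def by blast
  then obtain pf where pf: "\<forall>f\<in>F. (\<forall>i. coeff (pf f) i \<in> R) \<and> f = c * poly (pf f) x"
    by metis
  define N where "N = (\<Sum>f\<in>F. degree (pf f))"
  have "c * x ^ Suc N \<in> J"
    unfolding J_def using assms(1) unfolding subring_def
    by (intro CollectI exI[of _ "monom 1 (Suc N)"]) (simp add: poly_monom)
  then obtain m :: nat and r g where rg: "c * x ^ Suc N = (\<Sum>k<m. r k * g k)"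
    "\<forall>k<m. r k \<in> R \<and> g k \<in> F"
    unfolding F(3) mem_set_mult_iff by blast
  define q where "q = (\<Sum>k<m. smult (r k) (pf (g k)))"
  have "\<forall>i. coeff q i \<in> R"
    unfolding q_def coeff_sum coeff_smult using rg(2) pf
    by (auto intro!: subring_sum_mem[OF assms(1)] subring_closed(3)[OF assms(1)])
  moreover have "degree q \<le> N"
    unfolding q_def N_def using F(1) rg(2)
    by (intro degree_sum_le order_trans[OF degree_smult_le] member_le_sum) auto
  moreover have "c * poly q x = c * x ^ Suc N"
    unfolding rg(1) q_def using rg(2) pf
    by (auto simp: poly_sum sum_distrib_left algebra_simps intro!: sum.cong)
  ultimately show ?thesis
    using assms(1,4) by (intro integral_over_if_poly_eq_power) auto
qed

section \<open>Invertible ideals in Dedekind domains\<close>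

lemma dedekind_domain_subring: "dedekind_domain R \<Longrightarrow> subring R"
  unfolding dedekind_domain_def by blast

lemma dedekind_domain_noetherian: "dedekind_domain R \<Longrightarrow> noetherian R"
  unfolding dedekind_domain_def noetherian_def by blast

definition nonzero_primes :: "'a::field set \<Rightarrow> 'a set set" where
  "nonzero_primes R = {P. prime_ideal_of R P \<and> P \<noteq> {0}}"

lemma dedekind_domain_maximal_if_nonzero_prime:
  "dedekind_domain R \<Longrightarrow> P \<in> nonzero_primes R \<Longrightarrow> maximal_ideal_of R P"
  unfolding dedekind_domain_def nonzero_primes_def by blast

lemma dedekind_domain_mem_if_bounded_denominator:
  assumes "dedekind_domain R" "c \<in> R" "c \<noteq> 0" "\<forall>n. c * x ^ n \<in> R"
  shows "x \<in> R"
proof -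
  have "integral_over R x"
    using assms by (intro integral_over_if_bounded_denominator)
      (auto intro: dedekind_domain_subring dedekind_domain_noetherian)
  moreover have "x \<in> frac R"
    unfolding frac_def using assms(2,3) spec[OF assms(4), of 1]
    by (intro CollectI exI[of _ "c * x"] exI[of _ c]) simp
  ultimately show ?thesis
    using assms(1) unfolding dedekind_domain_def by blast
qed

lemma dedekind_domain_mem_if_stabilizes_ideal:
  assumes "dedekind_domain R" "ideal_of R I" "I \<noteq> {0}" "\<forall>z\<in>I. y * z \<in> I"
  shows "y \<in> R"
proof -
  have "I \<subseteq> R" "0 \<in> I"
    using assms(2) unfolding ideal_of_def by auto
  then obtain c where c: "c \<in> I" "c \<noteq> 0"
    using assms(3) by auto
  have "c * y ^ n \<in> I" for n
  proof (induction n)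
    case (Suc n)
    then have "y * (c * y ^ n) \<in> I"
      using assms(4) by simp
    then show ?case
      by (simp add: ac_simps)
  qed (use c in simp)
  with \<open>I \<subseteq> R\<close> c show ?thesis
    by (auto intro: dedekind_domain_mem_if_bounded_denominator[OF assms(1), of c])
qed

lemma maximal_imp_prime_ideal:
  assumes "subring R" "maximal_ideal_of R P"
  shows "prime_ideal_of R P"
proof -
  have P: "ideal_of R P" "P \<noteq> R"
    using assms(2) unfolding maximal_ideal_of_def by auto
  have "a \<in> P \<or> b \<in> P" if ab: "a \<in> R" "b \<in> R" "a * b \<in> P" for a b
  proof (rule disjCI)
    assume "b \<notin> P"
    have "P + b *o R = R"
      using assms(2) ideal_of_set_plus_principal[OF assms(1) P(1) ab(2)] \<open>b \<notin> P\<close>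
      unfolding maximal_ideal_of_def by metis
    moreover have "1 \<in> R"
      using assms(1) unfolding subring_def by simp
    ultimately have "1 \<in> P + b *o R"
      by simp
    then obtain m r where "1 = m + b * r" "m \<in> P" "r \<in> R"
      unfolding mem_set_plus_principal_iff by blast
    then have "a = a * m + r * (a * b)"
      by (metis distrib_left mult.left_commute mult.right_neutral)
    then show "a \<in> P"
      using P(1) ab \<open>m \<in> P\<close> \<open>r \<in> R\<close> unfolding ideal_of_def by (metis mult.commute)
  qed
  then show ?thesis
    using P unfolding prime_ideal_of_def by blast
qed

lemma prod_list_remove1:
  "x \<in> set xs \<Longrightarrow> prod_list xs = x * prod_list (remove1 x (xs :: 'a::comm_monoid_mult list))"
  by (induction xs) (auto simp: ac_simps)

lemma prod_list_subset_subring: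
  assumes "subring R" "\<forall>Q\<in>set Qs. Q \<subseteq> R"
  shows "prod_list Qs \<subseteq> R"
  using assms(2)
proof (induction Qs)
  case Nil
  then show ?case
    using assms(1) unfolding subring_def by simp
next
  case (Cons Q Qs)
  then show ?case
    using subring_closed(3)[OF assms(1)] by (auto elim!: set_times_elim)
qed

lemma prime_ideal_contains_factor:
  assumes "subring R" "prime_ideal_of R P" "\<forall>Q\<in>set Qs. ideal_of R Q" "prod_list Qs \<subseteq> P"
  shows "\<exists>Q\<in>set Qs. Q \<subseteq> P"
  using assms(3,4)
proof (induction Qs)
  case Nil
  then have "1 \<in> P"
    by simp
  then show ?case
    using assms(2) ideal_eq_if_one_mem unfolding prime_ideal_of_def by blast
next
  case (Cons Q Qs)
  show ?case
  proof (cases "Q \<subseteq> P")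
    case False
    then obtain q where q: "q \<in> Q" "q \<notin> P"
      by blast
    have "q \<in> R" "prod_list Qs \<subseteq> R"
      using Cons.prems(1) q(1) prod_list_subset_subring[OF assms(1)]
      unfolding ideal_of_def by auto
    have "w \<in> P" if "w \<in> prod_list Qs" for w
    proof -
      have "q * w \<in> P"
        using Cons.prems(2) q(1) that by (auto intro: set_times_intro)
      then show ?thesis
        using assms(2) q \<open>q \<in> R\<close> \<open>prod_list Qs \<subseteq> R\<close> that unfolding prime_ideal_of_def by blast
    qed
    then show ?thesis
      using Cons.IH Cons.prems(1) by auto
  qed simp
qed

lemma nonzero_ideal_contains_prime_product:
  assumes "subring R" "noetherian R" "ideal_of R I" "I \<noteq> {0}"
  shows "\<exists>Ps. set Ps \<subseteq> nonzero_primes R \<and> prod_list Ps \<subseteq> I"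
  using assms(2-4)
proof (induction I rule: noetherian_ideal_induct)
  case (step M)
  have larger: "\<exists>Ps. set Ps \<subseteq> nonzero_primes R \<and> prod_list Ps \<subseteq> M + c *o R"
    if "c \<in> R" "c \<notin> M" for c
  proof (rule step.IH)
    note extension = ideal_of_set_plus_principal[OF assms(1) step.hyps(1) \<open>c \<in> R\<close>]
    show "ideal_of R (M + c *o R)"
      by (fact extension(1))
    show "M \<subset> M + c *o R"
      using extension(2,3) \<open>c \<notin> M\<close> by blast
  qed
  consider "M = R" | "prime_ideal_of R M"
    | a b where "a \<in> R" "b \<in> R" "a * b \<in> M" "a \<notin> M" "b \<notin> M"
    using step.hyps(1) unfolding prime_ideal_of_def by blast
  then show ?case
  proof cases
    case 1
    then show ?thesis
      using assms(1) unfolding subring_def by (intro exI[of _ "[]"]) simp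
  next
    case 2
    then show ?thesis
      using step.hyps(2) unfolding nonzero_primes_def by (intro exI[of _ "[M]"]) (simp del: set_one)
  next
    case (3 a b)
    then obtain Ps Qs where
      "set Ps \<subseteq> nonzero_primes R" "prod_list Ps \<subseteq> M + a *o R"
      "set Qs \<subseteq> nonzero_primes R" "prod_list Qs \<subseteq> M + b *o R"
      using larger[of a] larger[of b] by blast
    moreover have "prod_list (Ps @ Qs) \<subseteq> M"
    proof -
      have "prod_list (Ps @ Qs) \<subseteq> (M + a *o R) * (M + b *o R)"
        unfolding prod_list.append by (rule set_times_mono2) fact+
      also have "\<dots> \<subseteq> M"
        using assms(1) step.hyps(1) 3(1-3) by (rule set_plus_principal_times_subset)
      finally show ?thesis .
    qed
    ultimately show ?thesis
      by (intro exI[of _ "Ps @ Qs"]) auto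
  qed
qed

lemma maximal_ideal_mem_if_contains_prime_product:
  assumes "dedekind_domain R" "maximal_ideal_of R P" "set Ps \<subseteq> nonzero_primes R" "prod_list Ps \<subseteq> P"
  shows "P \<in> set Ps"
proof -
  have R: "subring R"
    using assms(1) by (rule dedekind_domain_subring)
  have "\<exists>Q\<in>set Ps. Q \<subseteq> P"
    using assms(3,4) unfolding nonzero_primes_def prime_ideal_of_def
    by (intro prime_ideal_contains_factor[OF R maximal_imp_prime_ideal[OF R assms(2)]]) auto
  then obtain Q where Q: "Q \<in> set Ps" "Q \<subseteq> P"
    by blast
  then have "maximal_ideal_of R Q"
    using assms(1,3) dedekind_domain_maximal_if_nonzero_prime by blast
  then have "Q = P"
    using assms(2) Q(2) unfolding maximal_ideal_of_def by blast
  with Q(1) show ?thesis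
    by simp
qed

lemma cofactor_quotient_inverse_elem:
  fixes a b :: "'a::field"
  assumes "a \<noteq> 0" "P \<in> set Ps" "prod_list Ps \<subseteq> a *o R"
    and "b \<in> prod_list (remove1 P Ps)" "b \<notin> a *o R"
  shows "b / a \<notin> R \<and> (\<forall>p\<in>P. b / a * p \<in> R)"
proof (intro conjI ballI)
  fix p assume "p \<in> P"
  then have "p * b \<in> prod_list Ps"
    using prod_list_remove1[OF assms(2)] assms(4) by (metis set_times_intro)
  then obtain r where "r \<in> R" "p * b = a * r"
    using assms(3) unfolding elt_set_times_def by blast
  then show "b / a * p \<in> R"
    using assms(1) by (simp add: field_simps)
next
  show "b / a \<notin> R"
  proof
    assume "b / a \<in> R"
    then have "a * (b / a) \<in> a *o R"
      by (rule set_times_intro2)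
    then show False
      using assms(1,5) by simp
  qed
qed

text \<open>Take a product of nonzero primes inside \<open>a R\<close> (for some nonzero \<open>a \<in> P\<close>) of minimal length;
  one factor is \<open>P\<close>, and an element \<open>b\<close> of the product of the other factors outside \<open>a R\<close>
  gives \<open>y = b / a\<close>.\<close>
lemma maximal_ideal_inverse_elem:
  assumes "dedekind_domain R" "maximal_ideal_of R P" "P \<noteq> {0}"
  shows "\<exists>y. y \<notin> R \<and> (\<forall>p\<in>P. y * p \<in> R)"
proof -
  have R: "subring R" "noetherian R"
    using assms(1) by (auto intro: dedekind_domain_subring dedekind_domain_noetherian)
  have P: "ideal_of R P" "P \<noteq> R" "prime_ideal_of R P"
    using assms(2) maximal_imp_prime_ideal[OF R(1)] unfolding maximal_ideal_of_def by auto
  obtain a where a: "a \<in> P" "a \<noteq> 0"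
    using P(1) assms(3) unfolding ideal_of_def by auto
  have "a \<in> R"
    using P(1) a(1) unfolding ideal_of_def by auto
  have aR: "ideal_of R (a *o R)" "a *o R \<subseteq> P" "a *o R \<noteq> {0}"
    using ideal_of_principal[OF R(1) \<open>a \<in> R\<close>] principal_subset_ideal[OF P(1) a(1)]
      mem_principal[OF R(1), of a] a(2)
    by auto
  define good where
    "good Ps \<longleftrightarrow> set Ps \<subseteq> nonzero_primes R \<and> prod_list Ps \<subseteq> a *o R" for Ps
  obtain Ps0 where "good Ps0"
    using nonzero_ideal_contains_prime_product[OF R aR(1,3)] unfolding good_def by blast
  then obtain Ps where Ps: "good Ps" and minimal: "\<And>Qs. good Qs \<Longrightarrow> length Ps \<le> length Qs"
    using ex_has_least_nat[of good Ps0 length] by blast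
  have "P \<in> set Ps"
    using Ps aR(2) unfolding good_def
    by (intro maximal_ideal_mem_if_contains_prime_product[OF assms(1,2)]) auto
  define Ps' where "Ps' = remove1 P Ps"
  have "length Ps' < length Ps"
    unfolding Ps'_def using \<open>P \<in> set Ps\<close> length_pos_if_in_set[OF \<open>P \<in> set Ps\<close>]
    by (simp add: length_remove1)
  moreover have "set Ps' \<subseteq> nonzero_primes R"
    using Ps set_remove1_subset[of P Ps] unfolding good_def Ps'_def by blast
  ultimately have "\<not> prod_list Ps' \<subseteq> a *o R"
    using minimal[of Ps'] unfolding good_def by linarith
  then obtain b where "b \<in> prod_list Ps'" "b \<notin> a *o R"
    by blast
  then show ?thesis
    using cofactor_quotient_inverse_elem[OF a(2) \<open>P \<in> set Ps\<close>] Ps unfolding good_def Ps'_def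
    by blast
qed

definition ideal_inverse :: "'a::field set \<Rightarrow> 'a set \<Rightarrow> 'a set" where
  "ideal_inverse R I = {u. \<forall>z\<in>I. u * z \<in> R}"

definition invertible_ideal :: "'a::field set \<Rightarrow> 'a set \<Rightarrow> bool" where
  "invertible_ideal R I \<longleftrightarrow> 1 \<in> set_mult (ideal_inverse R I) I"

lemma invertible_ideal_if_products_mem:
  assumes "invertible_ideal R J"
    and "\<And>u z. u \<in> ideal_inverse R J \<Longrightarrow> z \<in> J \<Longrightarrow> u * z \<in> set_mult (ideal_inverse R I) I"
  shows "invertible_ideal R I"
proof -
  have "set_mult (ideal_inverse R J) J \<subseteq> set_mult (ideal_inverse R I) I"
    using assms(2) by (intro set_mult_subset zero_mem_set_mult) (auto intro: add_mem_set_mult)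
  then show ?thesis
    using assms(1) unfolding invertible_ideal_def by blast
qed

lemma invertible_ideal_if_extension_invertible:
  assumes "0 \<in> M" "invertible_ideal R (M + y *o M)"
  shows "invertible_ideal R M"
  using assms(2)
proof (rule invertible_ideal_if_products_mem)
  fix u z assume u: "u \<in> ideal_inverse R (M + y *o M)" and z: "z \<in> M + y *o M"
  obtain m m' where m: "z = m + y * m'" "m \<in> M" "m' \<in> M"
    using z unfolding set_plus_def elt_set_times_def by blast
  have "m \<in> M + y *o M" "y * m \<in> M + y *o M" if "m \<in> M" for m
    using set_plus_intro[OF that set_times_intro2[OF assms(1)], of y]
      set_plus_intro[OF assms(1) set_times_intro2[OF that], of y]
    by simp_all
  then have "u \<in> ideal_inverse R M" "u * y \<in> ideal_inverse R M"
    using u unfolding ideal_inverse_def by (auto simp: mult.assoc)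
  then have "u * m + (u * y) * m' \<in> set_mult (ideal_inverse R M) M"
    using m(2,3) by (intro add_mem_set_mult mult_mem_set_mult)
  then show "u * z \<in> set_mult (ideal_inverse R M) M"
    unfolding m(1) by (simp add: algebra_simps)
qed

lemma invertible_ideal_if_scaled_invertible:
  assumes "invertible_ideal R (e *o A)"
  shows "invertible_ideal R A"
  using assms
proof (rule invertible_ideal_if_products_mem)
  fix u z assume u: "u \<in> ideal_inverse R (e *o A)" and z: "z \<in> e *o A"
  obtain a where "a \<in> A" "z = e * a"
    using z unfolding elt_set_times_def by blast
  moreover have "u * e \<in> ideal_inverse R A"
    using u unfolding ideal_inverse_def elt_set_times_def by (auto simp: mult.assoc)
  ultimately show "u * z \<in> set_mult (ideal_inverse R A) A"
    using mult_mem_set_mult[of "u * e" _ a] by (simp add: mult.assoc)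
qed

lemma dedekind_domain_extension_psubset:
  assumes "dedekind_domain R" "ideal_of R M" "M \<noteq> {0}" "y \<notin> R" "\<forall>z\<in>M. y * z \<in> R"
  shows "ideal_of R (M + y *o M)" "M \<subset> M + y *o M"
proof -
  have "0 \<in> M"
    using assms(2) unfolding ideal_of_def by simp
  show "ideal_of R (M + y *o M)"
    using assms(2,5) dedekind_domain_subring[OF assms(1)]
    by (intro ideal_of_set_plus ideal_of_elt_set_times) (auto simp: ideal_of_iff_submodule_of)
  have "M \<subseteq> M + y *o M"
    using \<open>0 \<in> M\<close> set_times_intro2[of 0 M y] set_zero_plus2[of "y *o M" M]
    by (simp add: add.commute)
  moreover have "\<not> (\<forall>z\<in>M. y * z \<in> M)"
    using dedekind_domain_mem_if_stabilizes_ideal[OF assms(1-3)] assms(4) by blast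
  then have "M + y *o M \<noteq> M"
    using \<open>0 \<in> M\<close> by (auto intro: set_plus_intro[of 0 M, simplified] set_times_intro2)
  ultimately show "M \<subset> M + y *o M"
    by blast
qed

text \<open>Noetherian induction: for a proper ideal \<open>M\<close> inside a maximal ideal \<open>P\<close> and \<open>y \<notin> R\<close> with
  \<open>y P \<subseteq> R\<close>, the strictly larger ideal \<open>M + y M\<close> is invertible, and then so is \<open>M\<close>.\<close>
lemma dedekind_domain_invertible_ideal:
  assumes "dedekind_domain R" "ideal_of R I" "I \<noteq> {0}"
  shows "invertible_ideal R I"
proof -
  have R: "subring R" "noetherian R"
    using assms(1) by (auto intro: dedekind_domain_subring dedekind_domain_noetherian)
  from R(2) assms(2,3) show ?thesis
  proof (induction I rule: noetherian_ideal_induct)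
    case (step M)
    have "0 \<in> M"
      using step.hyps(1) unfolding ideal_of_def by simp
    show ?case
    proof (cases "M = R")
      case True
      have "1 * 1 \<in> set_mult (ideal_inverse R R) R"
        using R(1) unfolding ideal_inverse_def subring_def by (intro mult_mem_set_mult) auto
      then show ?thesis
        using True unfolding invertible_ideal_def by simp
    next
      case False
      then obtain P where P: "maximal_ideal_of R P" "M \<subseteq> P"
        using noetherian_exists_maximal_ideal[OF R(2) step.hyps(1)] by blast
      moreover have "P \<noteq> {0}"
        using P(2) step.hyps unfolding ideal_of_def by auto
      ultimately obtain y where y: "y \<notin> R" "\<forall>p\<in>P. y * p \<in> R"
        using maximal_ideal_inverse_elem[OF assms(1)] by blast
      have "invertible_ideal R (M + y *o M)"
        using dedekind_domain_extension_psubset[OF assms(1) step.hyps y(1)] y(2) P(2)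
        by (intro step.IH) auto
      then show ?thesis
        by (rule invertible_ideal_if_extension_invertible[OF \<open>0 \<in> M\<close>])
    qed
  qed
qed

lemma projective_module_if_invertible:
  assumes "subring R" "submodule_of R A" "invertible_ideal R A"
  shows "projective_module R A"
proof -
  obtain n :: nat and u j where one: "1 = (\<Sum>k<n. u k * j k)"
    and uj: "\<forall>k<n. u k \<in> ideal_inverse R A \<and> j k \<in> A"
    using assms(3) unfolding invertible_ideal_def mem_set_mult_iff by blast
  define \<iota> where "\<iota> x = (\<lambda>k. if k < n then u k * x else 0)" for x
  define \<pi> where "\<pi> v = (\<Sum>k<n. v k * j k)" for v
  show ?thesis
    unfolding projective_module_def
  proof (intro exI[of _ n] exI[of _ \<iota>] exI[of _ \<pi>] conjI ballI)
    fix x assume "x \<in> A"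
    then show "\<iota> x \<in> free_mod R n"
      using uj assms(1) unfolding free_mod_def \<iota>_def ideal_inverse_def subring_def by auto
    have "\<pi> (\<iota> x) = x * (\<Sum>k<n. u k * j k)"
      unfolding \<pi>_def \<iota>_def by (simp add: sum_distrib_left ac_simps)
    then show "\<pi> (\<iota> x) = x"
      unfolding one[symmetric] by simp
  next
    fix v assume "v \<in> free_mod R n"
    then show "\<pi> v \<in> A"
      unfolding \<pi>_def free_mod_def using uj assms(2) unfolding submodule_of_def
      by (intro sum_closed) auto
  qed (auto simp: \<iota>_def \<pi>_def algebra_simps sum.distrib sum_distrib_left)
qed

lemma common_denominator:
  assumes "subring R" "finite F" "\<forall>f\<in>F. g f \<in> frac R"
  shows "\<exists>d\<in>R. d \<noteq> 0 \<and> (\<forall>f\<in>F. d * g f \<in> R)"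
  using assms(2,3)
proof (induction F rule: finite_induct)
  case empty
  then show ?case
    using assms(1) unfolding subring_def by (intro bexI[of _ 1]) auto
next
  case (insert f F)
  then obtain d where d: "d \<in> R" "d \<noteq> 0" "\<forall>f\<in>F. d * g f \<in> R"
    by blast
  obtain a b where ab: "g f = a / b" "a \<in> R" "b \<in> R" "b \<noteq> 0"
    using insert.prems unfolding frac_def by blast
  have "d * b * g f = d * a"
    using ab by simp
  moreover have "d * b * g f' \<in> R" if "f' \<in> F" for f'
  proof -
    have "b * (d * g f') \<in> R"
      using that d(3) ab(3) subring_closed(3)[OF assms(1)] by simp
    then show ?thesis
      by (simp add: ac_simps)
  qed
  ultimately show ?case
    using d ab subring_closed(3)[OF assms(1)] by (intro bexI[of _ "d * b"]) auto
qed

lemma linear_map_common_denominator: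
  assumes "subring R" "finite F"
    and "\<forall>x y. h (x + y) = h x + h y" "\<forall>r\<in>R. \<forall>x. h (r * x) = r * h x"
    and "\<forall>f\<in>F. h f \<in> frac R"
  shows "\<exists>d\<in>R. d \<noteq> 0 \<and> (\<forall>t\<in>set_mult R F. d * h t \<in> R)"
proof -
  obtain d where d: "d \<in> R" "d \<noteq> 0" "\<forall>f\<in>F. d * h f \<in> R"
    using common_denominator[OF assms(1,2,5)] by blast
  have "h 0 = 0"
    using assms(3) by (metis add_0 add_cancel_right_right)
  have "d * h t \<in> R" if "t \<in> set_mult R F" for t
  proof -
    obtain n :: nat and r f where t: "t = (\<Sum>k<n. r k * f k)" and rf: "\<forall>k<n. r k \<in> R \<and> f k \<in> F"
      using \<open>t \<in> set_mult R F\<close> unfolding mem_set_mult_iff by blast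
    have "h (\<Sum>k<m. r k * f k) = (\<Sum>k<m. r k * h (f k))" if "m \<le> n" for m
      using that \<open>h 0 = 0\<close> assms(3,4) rf by (induction m) auto
    then have "d * h t = (\<Sum>k<n. r k * (d * h (f k)))"
      unfolding t by (simp add: sum_distrib_left ac_simps)
    also have "\<dots> \<in> R"
      using rf d(3) by (intro subring_sum_mem[OF assms(1)])
        (auto intro: subring_closed(3)[OF assms(1)])
    finally show ?thesis .
  qed
  then show ?thesis
    using d by blast
qed

section \<open>Quadratic extensions\<close>

locale field_automorphism =
  fixes \<sigma> :: "'a::field \<Rightarrow> 'a"
  assumes field_aut: "field_aut \<sigma>"
begin

lemma hom_add [simp]: "\<sigma> (x + y) = \<sigma> x + \<sigma> y"
  and hom_mult [simp]: "\<sigma> (x * y) = \<sigma> x * \<sigma> y"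
  and hom_one [simp]: "\<sigma> 1 = 1"
  using field_aut unfolding field_aut_def by auto

lemma hom_zero [simp]: "\<sigma> 0 = 0"
  using hom_add[of 0 0] by (metis add_0 add_cancel_right_right)

lemma hom_diff [simp]: "\<sigma> (x - y) = \<sigma> x - \<sigma> y"
  using hom_add[of "x - y" y] by (simp add: eq_diff_eq)

lemma hom_eq_iff [simp]: "\<sigma> x = \<sigma> y \<longleftrightarrow> x = y"
  using field_aut unfolding field_aut_def bij_def inj_def by blast

lemma hom_divide [simp]: "\<sigma> (x / y) = \<sigma> x / \<sigma> y"
proof (cases "y = 0")
  case False
  then have "\<sigma> (x / y) * \<sigma> y = \<sigma> x" and "\<sigma> y \<noteq> 0"
    using hom_mult[of "x / y" y] hom_eq_iff[of y 0] by simp_all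
  then show ?thesis
    by (simp add: eq_divide_eq)
qed simp

lemma hom_power [simp]: "\<sigma> (x ^ n) = \<sigma> x ^ n"
  by (induction n) simp_all

lemma hom_sum [simp]: "\<sigma> (\<Sum>k<(n::nat). f k) = (\<Sum>k<n. \<sigma> (f k))"
  by (induction n) simp_all

end

lemma Gal_two_elements:
  assumes "galois_over K" "Gal K = {id, \<sigma>}" "\<sigma> \<noteq> id"
  shows "field_aut \<sigma>" "\<sigma> (\<sigma> x) = x" "\<sigma> x = x \<longleftrightarrow> x \<in> K"
proof -
  have "\<sigma> \<in> Gal K"
    using assms(2) by blast
  then show \<sigma>: "field_aut \<sigma>"
    unfolding Gal_def by simp
  then interpret field_automorphism \<sigma>
    by unfold_locales
  have "field_aut (\<sigma> \<circ> \<sigma>)"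
    using \<sigma> bij_comp[of \<sigma> \<sigma>] unfolding field_aut_def by simp
  then have "\<sigma> \<circ> \<sigma> \<in> Gal K"
    using \<open>\<sigma> \<in> Gal K\<close> unfolding Gal_def by simp
  moreover have "\<sigma> \<circ> \<sigma> \<noteq> \<sigma>"
    using assms(3) by (metis comp_apply eq_id_iff hom_eq_iff)
  ultimately have "\<sigma> \<circ> \<sigma> = id"
    using assms(2) by blast
  then show "\<sigma> (\<sigma> x) = x"
    by (metis comp_apply id_apply)
  show "\<sigma> x = x \<longleftrightarrow> x \<in> K"
    using assms(1,2) unfolding galois_over_def by auto
qed

locale quadratic_extension = field_automorphism \<sigma> for \<sigma> :: "'a::field \<Rightarrow> 'a" +
  fixes OM OL :: "'a set"
  assumes dedekind_OM: "dedekind_domain OM"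
    and subring_OL: "subring OL"
    and OM_subset_OL: "OM \<subseteq> OL"
    and fin_gen_OL: "fin_gen_module OM OL"
    and frac_OL: "frac OL = UNIV"
    and involution: "\<sigma> (\<sigma> x) = x"
    and fixed_iff: "\<sigma> x = x \<longleftrightarrow> x \<in> frac OM"
    and nontrivial: "\<sigma> \<noteq> id"
begin

abbreviation antitraces :: "'a set" where
  "antitraces \<equiv> (\<lambda>x. x - \<sigma> x) ` OL"

lemma subring_OM: "subring OM"
  using dedekind_OM by (rule dedekind_domain_subring)

lemma fixes_OM: "r \<in> OM \<Longrightarrow> \<sigma> r = r"
  using subring_subset_frac[OF subring_OM] fixed_iff by blast

lemma exists_moved_integer: "\<exists>l\<in>OL. \<sigma> l \<noteq> l"
proof -
  obtain w where "\<sigma> w \<noteq> w"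
    using nontrivial by (metis eq_id_iff)
  moreover obtain p q where "w = p / q" "p \<in> OL" "q \<in> OL"
    using frac_OL unfolding frac_def by blast
  ultimately show ?thesis
    by (metis hom_divide)
qed

lemma fixed_linear_map_denominator:
  assumes "\<forall>x y. h (x + y) = h x + h y" "\<forall>r\<in>OM. \<forall>x. h (r * x) = r * h x"
    and "\<forall>x. \<sigma> (h x) = h x"
  shows "\<exists>d\<in>OM. d \<noteq> 0 \<and> (\<forall>t\<in>OL. d * h t \<in> OM)"
proof -
  obtain F where "finite F" "OL = set_mult OM F"
    using fin_gen_OL unfolding fin_gen_module_def by blast
  with assms show ?thesis
    using linear_map_common_denominator[OF subring_OM, of F h] fixed_iff by simp
qed

text \<open>With \<open>\<sigma> l \<noteq> l\<close>, the map \<open>h z = (z \<sigma>(l) - \<sigma>(z) l) / (\<sigma>(l) - l)\<close> is the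
  \<open>M\<close>-linear projection of \<open>L = M \<oplus> M l\<close> onto \<open>M\<close>; a common denominator \<open>d\<close> of \<open>h(O\<^sub>L)\<close>
  gives \<open>d x\<^sup>n = d h(x\<^sup>n) \<in> O\<^sub>M\<close> for every \<open>\<sigma>\<close>-fixed \<open>x \<in> O\<^sub>L\<close>.\<close>
lemma fixed_integer_in_OM:
  assumes "x \<in> OL" "\<sigma> x = x"
  shows "x \<in> OM"
proof -
  obtain l where l: "l \<in> OL" "\<sigma> l \<noteq> l"
    using exists_moved_integer by blast
  define h where "h z = (z * \<sigma> l - \<sigma> z * l) / (\<sigma> l - l)" for z
  have "\<sigma> (h z) = h z" for z
  proof -
    have "\<sigma> (h z) = - (z * \<sigma> l - \<sigma> z * l) / - (\<sigma> l - l)"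
      unfolding h_def by (simp add: involution)
    then show ?thesis
      unfolding h_def by (simp only: minus_divide_divide)
  qed
  moreover have "\<forall>x y. h (x + y) = h x + h y"
    unfolding h_def by (simp add: add_divide_distrib[symmetric] algebra_simps)
  moreover have "\<forall>r\<in>OM. \<forall>x. h (r * x) = r * h x"
    unfolding h_def by (simp add: fixes_OM algebra_simps)
  ultimately obtain d where d: "d \<in> OM" "d \<noteq> 0" "\<forall>t\<in>OL. d * h t \<in> OM"
    using fixed_linear_map_denominator by blast
  have "h (x ^ n) = x ^ n" for n
    using assms(2) l(2) unfolding h_def by (simp add: field_simps)
  then have "\<forall>n. d * x ^ n \<in> OM"
    using d(3) subring_power_mem[OF subring_OL assms(1)] by metis
  then show ?thesis
    using dedekind_domain_mem_if_bounded_denominator[OF dedekind_OM d(1,2)] by blast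
qed

lemma set_mult_OL_subset: "I \<subseteq> OM \<Longrightarrow> set_mult I OL \<subseteq> OL"
  using subring_OL OM_subset_OL unfolding subring_def by (intro set_mult_subset) auto

lemma antitrace_OM_linear:
  assumes "\<forall>k<n. i k \<in> OM"
  shows "(\<Sum>k<n. i k * l k) - \<sigma> (\<Sum>k<n. i k * l k) = (\<Sum>k<(n::nat). i k * (l k - \<sigma> (l k)))"
  using assms fixes_OM by (simp add: sum_subtractf right_diff_distrib)

lemma OM_plus_ideal_eq:
  assumes "I \<subseteq> OM"
  shows "{m + y | m y. m \<in> OM \<and> y \<in> set_mult I OL}
    = {x \<in> OL. x - \<sigma> x \<in> set_mult I antitraces}"
proof (intro equalityI subsetI)
  fix z assume "z \<in> {m + y | m y. m \<in> OM \<and> y \<in> set_mult I OL}"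
  then obtain m y where z: "z = m + y" "m \<in> OM" "y \<in> set_mult I OL"
    by blast
  then obtain n :: nat and i l where y: "y = (\<Sum>k<n. i k * l k)"
    and il: "\<forall>k<n. i k \<in> I \<and> l k \<in> OL"
    unfolding mem_set_mult_iff by blast
  have "z \<in> OL"
    using z set_mult_OL_subset[OF assms] OM_subset_OL subring_closed(1)[OF subring_OL] by auto
  moreover have "z - \<sigma> z = (\<Sum>k<n. i k * (l k - \<sigma> (l k)))"
    using antitrace_OM_linear[of n i l] il assms fixes_OM[OF z(2)]
    unfolding z(1) y by auto
  moreover have "(\<Sum>k<n. i k * (l k - \<sigma> (l k))) \<in> set_mult I antitraces"
    unfolding mem_set_mult_image_iff using il by blast
  ultimately show "z \<in> {x \<in> OL. x - \<sigma> x \<in> set_mult I antitraces}"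
    by simp
next
  fix z assume "z \<in> {x \<in> OL. x - \<sigma> x \<in> set_mult I antitraces}"
  then obtain n :: nat and i l where z: "z \<in> OL" "z - \<sigma> z = (\<Sum>k<n. i k * (l k - \<sigma> (l k)))"
    and il: "\<forall>k<n. i k \<in> I \<and> l k \<in> OL"
    unfolding mem_set_mult_image_iff by blast
  define y where "y = (\<Sum>k<n. i k * l k)"
  have y: "y \<in> set_mult I OL"
    unfolding y_def mem_set_mult_iff using il by blast
  have "y - \<sigma> y = z - \<sigma> z"
    unfolding y_def z(2) using il assms by (intro antitrace_OM_linear) auto
  then have "\<sigma> (z - y) = z - y"
    by (simp add: algebra_simps eq_diff_eq diff_eq_eq)
  then have "z - y \<in> OM"
    using y set_mult_OL_subset[OF assms] z(1) subring_closed(2)[OF subring_OL]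
    by (intro fixed_integer_in_OM) auto
  with y show "z \<in> {m + y | m y. m \<in> OM \<and> y \<in> set_mult I OL}"
    by (metis (mono_tags, lifting) diff_add_cancel mem_Collect_eq)
qed

lemma submodule_of_antitraces: "submodule_of OM antitraces"
  unfolding submodule_of_def
proof (intro conjI ballI)
  show "0 \<in> antitraces"
    using image_eqI[of 0 "\<lambda>x. x - \<sigma> x" 0 OL] subring_OL unfolding subring_def by simp
next
  fix a b assume "a \<in> antitraces" "b \<in> antitraces"
  then obtain x y where "x \<in> OL" "y \<in> OL" "a = x - \<sigma> x" "b = y - \<sigma> y"
    by blast
  then have "a + b = (x + y) - \<sigma> (x + y)" "x + y \<in> OL"
    using subring_closed(1)[OF subring_OL] by auto
  then show "a + b \<in> antitraces"
    by (rule image_eqI)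
next
  fix r a assume "r \<in> OM" "a \<in> antitraces"
  then obtain x where "x \<in> OL" "a = x - \<sigma> x"
    by blast
  then have "r * a = r * x - \<sigma> (r * x)" "r * x \<in> OL"
    using \<open>r \<in> OM\<close> OM_subset_OL subring_closed(3)[OF subring_OL] fixes_OM
    by (auto simp: right_diff_distrib)
  then show "r * a \<in> antitraces"
    by (rule image_eqI)
qed

lemma antitrace_anti_fixed: "a \<in> antitraces \<Longrightarrow> \<sigma> a = - a"
  by (auto simp: involution)

lemma nonzero_antitrace: "\<exists>a\<in>antitraces. a \<noteq> 0"
  using exists_moved_integer by force

lemma antitraces_rank_one: "rank_one OM antitraces"
proof -
  obtain a where a: "a \<in> antitraces" "a \<noteq> 0"
    using nonzero_antitrace by blast
  have "x / a \<in> frac OM" if "x \<in> antitraces" for x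
    unfolding fixed_iff[symmetric] using antitrace_anti_fixed[OF that] antitrace_anti_fixed[OF a(1)]
    by simp
  then show ?thesis
    unfolding rank_one_def using a by (metis nonzero_eq_divide_eq)
qed

lemma antitraces_denominator: "\<exists>e. e \<noteq> 0 \<and> (\<forall>a\<in>antitraces. e * a \<in> OM)"
proof -
  obtain a where a: "a \<in> antitraces" "a \<noteq> 0"
    using nonzero_antitrace by blast
  define h where "h z = a * (z - \<sigma> z)" for z
  have "\<forall>x y. h (x + y) = h x + h y" "\<forall>r\<in>OM. \<forall>x. h (r * x) = r * h x" "\<forall>x. \<sigma> (h x) = h x"
    unfolding h_def using antitrace_anti_fixed[OF a(1)]
    by (auto simp: fixes_OM algebra_simps involution)
  then obtain d where d: "d \<in> OM" "d \<noteq> 0" "\<forall>t\<in>OL. d * h t \<in> OM"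
    using fixed_linear_map_denominator by blast
  then have "\<forall>b\<in>antitraces. d * a * b \<in> OM"
    unfolding h_def by (auto simp: ac_simps)
  then show ?thesis
    using d(2) a(2) by (intro exI[of _ "d * a"]) simp
qed

lemma antitraces_projective: "projective_module OM antitraces"
proof -
  obtain e where e: "e \<noteq> 0" "\<forall>a\<in>antitraces. e * a \<in> OM"
    using antitraces_denominator by blast
  with submodule_of_antitraces have "ideal_of OM (e *o antitraces)"
    by (intro ideal_of_elt_set_times)
  moreover have "e *o antitraces \<noteq> {0}"
    using nonzero_antitrace e(1) set_times_intro2[of _ antitraces e] by fastforce
  ultimately have "invertible_ideal OM (e *o antitraces)"
    by (rule dedekind_domain_invertible_ideal[OF dedekind_OM])
  then have "invertible_ideal OM antitraces"
    by (rule invertible_ideal_if_scaled_invertible)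
  then show ?thesis
    by (rule projective_module_if_invertible[OF subring_OM submodule_of_antitraces])
qed

end

theorem proposition3p8:
  fixes OM OL :: "'a::field set" and \<sigma> :: "'a \<Rightarrow> 'a"
  assumes "dedekind_domain OM" and "dedekind_domain OL" and "OM \<subseteq> OL"
    and "fin_gen_module OM OL"
    and "frac OL = UNIV"
    and "degree_two_over (frac OM)"
    and "galois_over (frac OM)"
    and "Gal (frac OM) = {id, \<sigma>}" and "\<sigma> \<noteq> id"
  shows "(\<forall>I. ideal_of OM I \<and> I \<noteq> {0} \<longrightarrow>
           {m + y | m y. m \<in> OM \<and> y \<in> set_mult I OL}
           = {x \<in> OL. x - \<sigma> x \<in> set_mult I ((\<lambda>x. x - \<sigma> x) ` OL)})
         \<and> projective_module OM ((\<lambda>x. x - \<sigma> x) ` OL)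
         \<and> rank_one OM ((\<lambda>x. x - \<sigma> x) ` OL)"
proof -
  interpret quadratic_extension \<sigma> OM OL
    using assms Gal_two_elements[OF assms(7-9)]
    by unfold_locales (auto intro: dedekind_domain_subring)
  show ?thesis
    by (simp add: ideal_of_iff_submodule_of OM_plus_ideal_eq antitraces_projective
        antitraces_rank_one)
qed

end
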